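(* Let $F=P_{\ell_1}\cup\cdots\cup P_{\ell_k}$ be a linear forest with $k\ge2$, $\ell_1\ge\cdots\ge\ell_k\ge2$ and $\ell_i\ne 3$ for all $i$. If $P_{2\delta_F+1}\cup P_{\delta_F+1}$ is $F$-free, then $F=2P_\ell$ for some odd $\ell$. Moreover, in that case $P_{2\delta_F+1}\cup P_{\delta_F+2}$ contains $F$ as a subgraph.
   Context: $P_m$ is the path on $m$ vertices; $G\cup H$ is disjoint union and $tG$ is $t$ disjoint copies of $G$. $\delta_F=\sum_{i=1}^k\lfloor \ell_i/2\rfloor-1$. A graph is $F$-free if it has no subgraph isomorphic to $F$. *)

theory Defs
  imports Main
begin

definition has_subgraph ::
  "'a set \<Rightarrow> ('a \<Rightarrow> 'a \<Rightarrow> bool) \<Rightarrow> 'b set \<Rightarrow> ('b \<Rightarrow> 'b \<Rightarrow> bool) \<Rightarrow> bool" where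
  "has_subgraph VG EG VH EH =
     (\<exists>f. inj_on f VH \<and> f ` VH \<subseteq> VG \<and> (\<forall>u\<in>VH. \<forall>v\<in>VH. EH u v \<longrightarrow> EG (f u) (f v)))"

text \<open>The linear forest P_{l_1} \<union> ... \<union> P_{l_k} given by the list [l_1,...,l_k]:
  vertex (i,j) is the j-th vertex of the i-th path.\<close>

definition lf_V :: "nat list \<Rightarrow> (nat \<times> nat) set" where
  "lf_V ls = {(i, j). i < length ls \<and> j < ls ! i}"

definition lf_E :: "nat list \<Rightarrow> nat \<times> nat \<Rightarrow> nat \<times> nat \<Rightarrow> bool" where
  "lf_E ls u v = (u \<in> lf_V ls \<and> v \<in> lf_V ls \<and> fst u = fst v \<and>
                  (snd v = snd u + 1 \<or> snd u = snd v + 1))"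

definition lf_contains :: "nat list \<Rightarrow> nat list \<Rightarrow> bool" where
  "lf_contains gs fs = has_subgraph (lf_V gs) (lf_E gs) (lf_V fs) (lf_E fs)"

definition delta_F :: "nat list \<Rightarrow> nat" where
  "delta_F ls = (\<Sum>i<length ls. ls ! i div 2) - 1"

end

theory Submission
  imports Defs
begin

text \<open>Write \<open>s = \<Sum> \<lfloor>l\<^sub>i/2\<rfloor> = \<delta>\<^sub>F + 1\<close> and \<open>o\<close> for the number of odd \<open>l\<^sub>i\<close>, so that
  \<open>\<Sum> l\<^sub>i = 2s + o\<close>. Paths can be laid end to end inside a host path, so \<open>F\<close> embeds into
  \<open>P\<^bsub>2s-1\<^esub> \<union> P\<^bsub>s\<^esub>\<close> as soon as some set of components has total length between \<open>o + 1\<close>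
  and \<open>s\<close>. Since every \<open>l\<^sub>i\<close> is \<open>2\<close>, \<open>4\<close> or at least \<open>5\<close>, we have \<open>2o \<le> s\<close>; a component of
  length at most \<open>o\<close> is light, and greedily collecting light components overshoots \<open>o\<close> by at
  most \<open>o\<close>. If the light components do not suffice, at least two components are longer than
  \<open>s\<close>, which forces \<open>F = 2P\<^sub>l\<close> with \<open>l\<close> odd. For that \<open>F\<close> the two copies of \<open>P\<^sub>l\<close> fit into
  \<open>P\<^bsub>2l-3\<^esub>\<close> and \<open>P\<^sub>l\<close> separately.\<close>

lemma sum_prefix_add_le:
  fixes w :: "nat \<Rightarrow> nat"
  assumes "finite X" "i \<in> X" "i < i'"
  shows "sum w (X \<inter> {..<i}) + w i \<le> sum w (X \<inter> {..<i'})"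
proof -
  have "sum w (insert i (X \<inter> {..<i})) \<le> sum w (X \<inter> {..<i'})"
    by (rule sum_mono2) (use assms in auto)
  moreover have "sum w (insert i (X \<inter> {..<i})) = w i + sum w (X \<inter> {..<i})"
    using assms by (subst sum.insert) auto
  ultimately show ?thesis by simp
qed

lemma sum_prefix_add_less:
  fixes w :: "nat \<Rightarrow> nat"
  assumes "finite X" "i \<in> X" "j < w i"
  shows "sum w (X \<inter> {..<i}) + j < sum w X"
proof -
  have "sum w (insert i (X \<inter> {..<i})) \<le> sum w X"
    by (rule sum_mono2) (use assms in auto)
  moreover have "sum w (insert i (X \<inter> {..<i})) = w i + sum w (X \<inter> {..<i})"
    using assms by (subst sum.insert) auto
  ultimately show ?thesis using assms by simp
qed

lemma sum_prefix_add_inj: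
  fixes w :: "nat \<Rightarrow> nat"
  assumes "finite X" "i \<in> X" "i' \<in> X" "j < w i" "j' < w i'"
    and "sum w (X \<inter> {..<i}) + j = sum w (X \<inter> {..<i'}) + j'"
  shows "i = i' \<and> j = j'"
proof (cases i i' rule: linorder_cases)
  case less
  from sum_prefix_add_le[OF assms(1,2) less, of w] assms show ?thesis by simp
next
  case greater
  from sum_prefix_add_le[OF assms(1,3) greater, of w] assms show ?thesis by simp
qed (use assms in simp)

text \<open>Path \<open>i\<close> of \<open>ls\<close> goes into path \<open>g i\<close> of \<open>gs\<close>, right after the paths of the same group
  with smaller index.\<close>

lemma lf_contains_if_groups_fit:
  fixes ls gs :: "nat list" and g :: "nat \<Rightarrow> nat"
  assumes into: "\<And>i. i < length ls \<Longrightarrow> g i < length gs"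
    and fit: "\<And>k. k < length gs \<Longrightarrow> (\<Sum>i | i < length ls \<and> g i = k. ls ! i) \<le> gs ! k"
  shows "lf_contains gs ls"
proof -
  define grp where "grp k = {i. i < length ls \<and> g i = k}" for k
  define f where "f = (\<lambda>(i, j). (g i, sum ((!) ls) (grp (g i) \<inter> {..<i}) + j))"
  have fin: "finite (grp k)" for k by (simp add: grp_def)
  have own: "i \<in> grp (g i)" if "i < length ls" for i using that by (simp add: grp_def)
  have inj: "inj_on f (lf_V ls)"
  proof (rule inj_onI)
    fix u v assume u: "u \<in> lf_V ls" and v: "v \<in> lf_V ls" and eq: "f u = f v"
    obtain i j i' j' where uv: "u = (i, j)" "v = (i', j')" by force
    with u v have ij: "i < length ls" "j < ls ! i" "i' < length ls" "j' < ls ! i'"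
      by (auto simp: lf_V_def)
    from eq uv have same: "g i' = g i"
      and "sum ((!) ls) (grp (g i) \<inter> {..<i}) + j = sum ((!) ls) (grp (g i) \<inter> {..<i'}) + j'"
      by (auto simp: f_def)
    with own[OF ij(3)] ij(2,4)
      sum_prefix_add_inj[where X = "grp (g i)" and w = "(!) ls" and i = i and i' = i' and j = j and j' = j']
    have "i = i' \<and> j = j'" using fin own[OF ij(1)] by simp
    then show "u = v" using uv by simp
  qed
  have img: "f ` lf_V ls \<subseteq> lf_V gs"
  proof
    fix y assume "y \<in> f ` lf_V ls"
    then obtain i j where ij: "i < length ls" "j < ls ! i" and y: "y = f (i, j)"
      by (auto simp: lf_V_def)
    have "sum ((!) ls) (grp (g i) \<inter> {..<i}) + j < sum ((!) ls) (grp (g i))"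
      using sum_prefix_add_less[where X = "grp (g i)" and w = "(!) ls"] fin own[OF ij(1)] ij(2)
      by blast
    also have "\<dots> \<le> gs ! g i" using fit[OF into[OF ij(1)]] by (simp add: grp_def)
    finally show "y \<in> lf_V gs" using y into[OF ij(1)] by (simp add: f_def lf_V_def)
  qed
  have "lf_E gs (f u) (f v)" if "u \<in> lf_V ls" "v \<in> lf_V ls" "lf_E ls u v" for u v
  proof -
    obtain i j i' j' where uv: "u = (i, j)" "v = (i', j')" by force
    with that have "i = i'" "j' = j + 1 \<or> j = j' + 1" by (auto simp: lf_E_def)
    with that img uv show ?thesis by (auto simp: lf_E_def f_def)
  qed
  with inj img show ?thesis unfolding lf_contains_def has_subgraph_def by blast
qed

lemma lf_contains_two_paths:
  fixes ls :: "nat list"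
  assumes "S \<subseteq> {..<length ls}"
    and "(\<Sum>i\<in>S. ls ! i) \<le> A"
    and "(\<Sum>i\<in>{..<length ls} - S. ls ! i) \<le> B"
  shows "lf_contains [A, B] ls"
proof (rule lf_contains_if_groups_fit[where g = "\<lambda>i. if i \<in> S then 0 else 1"])
  fix k :: nat assume "k < length [A, B]"
  then consider "k = 0" | "k = 1" by fastforce
  then show "(\<Sum>i | i < length ls \<and> (if i \<in> S then 0 else 1) = k. ls ! i) \<le> [A, B] ! k"
  proof cases
    case 1
    then have "{i. i < length ls \<and> (if i \<in> S then 0 else 1) = k} = S" using assms(1) by auto
    then show ?thesis using 1 assms(2) by simp
  next
    case 2
    then have "{i. i < length ls \<and> (if i \<in> S then 0 else 1) = k} = {..<length ls} - S" by auto
    then show ?thesis using 2 assms(3) by simp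
  qed
qed simp

lemma subset_sum_in_window:
  fixes w :: "'a \<Rightarrow> nat"
  assumes "finite I" "c < sum w I" "\<And>i. i \<in> I \<Longrightarrow> w i \<le> c"
  shows "\<exists>S\<subseteq>I. c < sum w S \<and> sum w S \<le> 2 * c"
  using assms
proof (induction I rule: finite_induct)
  case (insert x I)
  show ?case
  proof (cases "c < sum w I")
    case True
    with insert obtain S where "S \<subseteq> I" "c < sum w S \<and> sum w S \<le> 2 * c" by auto
    then show ?thesis by blast
  next
    case False
    moreover have "w x \<le> c" using insert.prems(2) by simp
    ultimately show ?thesis using insert.prems(1) insert.hyps by (intro exI[of _ "insert x I"]) simp
  qed
qed simp

definition half_sum :: "('a \<Rightarrow> nat) \<Rightarrow> 'a set \<Rightarrow> nat" where
  "half_sum w I = (\<Sum>i\<in>I. w i div 2)"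

definition odd_count :: "('a \<Rightarrow> nat) \<Rightarrow> 'a set \<Rightarrow> nat" where
  "odd_count w I = card {i\<in>I. odd (w i)}"

lemma sum_eq_half_sum_odd_count:
  fixes w :: "'a \<Rightarrow> nat"
  assumes "finite I"
  shows "sum w I = 2 * half_sum w I + odd_count w I"
proof -
  have "odd_count w I = (\<Sum>i\<in>I. if odd (w i) then 1 else 0)"
    unfolding odd_count_def using sum.inter_filter[OF assms, of "\<lambda>_. 1::nat"] by simp
  moreover have "sum w I = (\<Sum>i\<in>I. 2 * (w i div 2) + (if odd (w i) then 1 else 0))"
    by (rule sum.cong) auto
  ultimately show ?thesis by (simp add: half_sum_def sum.distrib sum_distrib_left)
qed

lemma odd_count_le_half_sum:
  fixes w :: "'a \<Rightarrow> nat"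
  assumes "finite I" "\<And>i. i \<in> I \<Longrightarrow> 2 \<le> w i \<and> w i \<noteq> 3"
  shows "2 * odd_count w I \<le> half_sum w I"
proof -
  have "2 * odd_count w I = (\<Sum>i | i \<in> I \<and> odd (w i). 2)" by (simp add: odd_count_def)
  also have "\<dots> \<le> (\<Sum>i | i \<in> I \<and> odd (w i). w i div 2)"
  proof (rule sum_mono)
    fix i assume "i \<in> {i. i \<in> I \<and> odd (w i)}"
    then have "i \<in> I" "odd (w i)" by simp_all
    with assms(2)[OF this(1)] show "2 \<le> w i div 2" by presburger
  qed
  also have "\<dots> \<le> half_sum w I"
    unfolding half_sum_def by (rule sum_mono2) (use assms(1) in auto)
  finally show ?thesis .
qed

lemma heavy_pair_is_odd_twin:
  fixes w :: "'a \<Rightarrow> nat"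
  assumes "finite I" "\<And>i. i \<in> I \<Longrightarrow> 2 \<le> w i"
    and ab: "a \<in> I" "b \<in> I" "a \<noteq> b"
    and heavy: "half_sum w I < w a" "half_sum w I < w b"
  shows "I = {a, b} \<and> w a = w b \<and> odd (w a)"
proof -
  define rest where "rest = (\<Sum>i\<in>I - {a, b}. w i div 2)"
  have split: "half_sum w I = w a div 2 + w b div 2 + rest"
    using assms(1) ab
    by (simp add: half_sum_def rest_def sum.subset_diff[of "{a, b}" I])
  have halves: "w a = 2 * (w a div 2) + w a mod 2" "w a mod 2 < 2"
    "w b = 2 * (w b div 2) + w b mod 2" "w b mod 2 < 2" by simp_all
  have "I - {a, b} = {}"
  proof (rule ccontr)
    assume "I - {a, b} \<noteq> {}"
    then obtain c where c: "c \<in> I - {a, b}" by blast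
    have "w c div 2 \<le> rest" unfolding rest_def using assms(1) c by (intro member_le_sum) auto
    moreover have "1 \<le> w c div 2" using assms(2)[of c] c by simp
    ultimately show False using split heavy halves by linarith
  qed
  then have "rest = 0" unfolding rest_def by (simp only: sum.empty)
  with split heavy halves have "w a div 2 = w b div 2" "w a mod 2 = 1" "w b mod 2 = 1"
    by linarith+
  with halves \<open>I - {a, b} = {}\<close> ab show ?thesis by (auto simp: odd_iff_mod_2_eq_one)
qed

lemma odd_count_less_sum_if_card_diff_le_1:
  fixes w :: "'a \<Rightarrow> nat"
  assumes "finite I" "\<And>i. i \<in> I \<Longrightarrow> 2 \<le> w i \<and> w i \<noteq> 3"
    and "J \<subseteq> I" "J \<noteq> {}" "card (I - J) \<le> 1"
  shows "odd_count w I < sum w J"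
proof -
  define Jo where "Jo = {i\<in>J. odd (w i)}"
  have fin: "finite J" "finite (I - J)" using assms(1,3) finite_subset by auto
  have "odd_count w I \<le> card (Jo \<union> (I - J))"
    unfolding odd_count_def using fin by (intro card_mono) (auto simp: Jo_def)
  also have "\<dots> \<le> card Jo + 1"
    using card_Un_le[of Jo "I - J"] assms(5) by linarith
  finally have "odd_count w I \<le> card Jo + 1" .
  moreover have "sum w J = sum w Jo + sum w (J - Jo)"
    using fin by (simp add: Jo_def sum.subset_diff[of Jo J])
  moreover have "5 * card Jo \<le> sum w Jo"
  proof -
    have "5 \<le> w i" if "i \<in> Jo" for i
    proof -
      from that assms(3) have "i \<in> I" "odd (w i)" by (auto simp: Jo_def)
      with assms(2)[OF this(1)] show ?thesis by presburger
    qed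
    then show ?thesis using sum_mono[of Jo "\<lambda>_. 5" w] by simp
  qed
  moreover have "2 * card (J - Jo) \<le> sum w (J - Jo)"
    using sum_mono[of "J - Jo" "\<lambda>_. 2" w] assms(2,3) by (simp add: subset_iff)
  moreover have "card Jo + card (J - Jo) = card J"
    using fin by (simp add: Jo_def card_Diff_subset card_mono)
  moreover have "card J \<ge> 1" using fin assms(4) by (simp add: Suc_le_eq card_gt_0_iff)
  ultimately show ?thesis by linarith
qed

lemma balanced_subset_exists:
  fixes w :: "'a \<Rightarrow> nat"
  assumes fin: "finite I" and two: "2 \<le> card I"
    and wt: "\<And>i. i \<in> I \<Longrightarrow> 2 \<le> w i \<and> w i \<noteq> 3"
    and not_twin: "\<not> (\<exists>a b. a \<noteq> b \<and> I = {a, b} \<and> w a = w b \<and> odd (w a))"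
  shows "\<exists>S\<subseteq>I. odd_count w I < sum w S \<and> sum w S \<le> half_sum w I"
proof (cases "\<exists>i\<in>I. odd_count w I < w i \<and> w i \<le> half_sum w I")
  case True
  then obtain i where "i \<in> I" "odd_count w I < w i" "w i \<le> half_sum w I" by blast
  then show ?thesis by (intro exI[of _ "{i}"]) simp
next
  case False
  define light where "light = {i\<in>I. w i \<le> odd_count w I}"
  have heavy: "half_sum w I < w i" if "i \<in> I - light" for i
    using that False by (auto simp: light_def)
  have "card (I - light) \<le> 1"
  proof (rule ccontr)
    assume "\<not> card (I - light) \<le> 1"
    with fin obtain a b where "a \<in> I - light" "b \<in> I - light" "a \<noteq> b"
      by (auto simp: card_le_Suc0_iff_eq One_nat_def)
    with heavy_pair_is_odd_twin[OF fin _ _ _ _ heavy heavy] wt not_twin show False by blast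
  qed
  moreover have "light \<noteq> {}" using two \<open>card (I - light) \<le> 1\<close> by auto
  ultimately have "odd_count w I < sum w light"
    using odd_count_less_sum_if_card_diff_le_1[of I w, OF fin wt] by (auto simp: light_def)
  moreover have "finite light" "\<And>i. i \<in> light \<Longrightarrow> w i \<le> odd_count w I"
    using fin by (auto simp: light_def)
  ultimately obtain S where "S \<subseteq> light" "odd_count w I < sum w S" "sum w S \<le> 2 * odd_count w I"
    using subset_sum_in_window[of light "odd_count w I" w] by blast
  with odd_count_le_half_sum[of I w, OF fin wt] show ?thesis by (auto simp: light_def)
qed

lemma lf_contains_delta_F_paths_unless_odd_twin:
  fixes ls :: "nat list"
  assumes "2 \<le> length ls" "\<forall>l\<in>set ls. 2 \<le> l \<and> l \<noteq> 3"
    and not_twin: "\<not> (\<exists>l. odd l \<and> ls = [l, l])"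
  shows "lf_contains [2 * delta_F ls + 1, delta_F ls + 1] ls"
proof -
  define I where "I = {..<length ls}"
  define s where "s = half_sum ((!) ls) I"
  define oc where "oc = odd_count ((!) ls) I"
  have wt: "\<And>i. i \<in> I \<Longrightarrow> 2 \<le> ls ! i \<and> ls ! i \<noteq> 3"
    using assms(2) by (simp add: I_def)
  have "\<not> (\<exists>a b. a \<noteq> b \<and> I = {a, b} \<and> ls ! a = ls ! b \<and> odd (ls ! a))"
  proof
    assume "\<exists>a b. a \<noteq> b \<and> I = {a, b} \<and> ls ! a = ls ! b \<and> odd (ls ! a)"
    then obtain a b where ab: "a \<noteq> b" "I = {a, b}" "ls ! a = ls ! b" "odd (ls ! a)" by blast
    then have "length ls = 2" using card_lessThan[of "length ls"] by (simp add: I_def)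
    moreover have "a < 2" "b < 2" using ab(2) \<open>length ls = 2\<close> by (auto simp: I_def set_eq_iff)
    with ab have "ls ! 0 = ls ! a" "ls ! 1 = ls ! a" by (auto simp: less_2_cases_iff)
    ultimately have "ls = [ls ! a, ls ! a]" by (intro nth_equalityI) (auto simp: less_2_cases_iff)
    with ab(4) not_twin show False by blast
  qed
  then obtain S where S: "S \<subseteq> I" "oc < sum ((!) ls) S" "sum ((!) ls) S \<le> s"
    using balanced_subset_exists[of I "(!) ls", OF _ _ wt] assms(1) by (auto simp: I_def s_def oc_def)
  have "sum ((!) ls) I = sum ((!) ls) (I - S) + sum ((!) ls) S"
    using S(1) by (intro sum.subset_diff) (auto simp: I_def)
  moreover have "sum ((!) ls) I = 2 * s + oc"
    by (simp add: I_def s_def oc_def sum_eq_half_sum_odd_count)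
  moreover have "delta_F ls = s - 1" by (simp add: delta_F_def s_def half_sum_def I_def)
  ultimately show ?thesis
    using lf_contains_two_paths[of "I - S" ls] S by (simp add: I_def double_diff)
qed

lemma lf_contains_odd_twin:
  assumes "odd l" "5 \<le> l"
  shows "lf_contains [2 * delta_F [l, l] + 1, delta_F [l, l] + 2] [l, l]"
proof -
  have "delta_F [l, l] = 2 * (l div 2) - 1" by (simp add: delta_F_def lessThan_nat_numeral)
  moreover have "{..<length [l, l]} - {0} = {1}" by auto
  ultimately show ?thesis
    using assms lf_contains_two_paths[of "{0}" "[l, l]"] by (auto elim!: oddE)
qed

theorem mainTheorem5:
  fixes ls :: "nat list"
  assumes "length ls \<ge> 2"
    and "sorted (rev ls)"
    and "\<forall>l\<in>set ls. l \<ge> 2 \<and> l \<noteq> 3"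
  shows "(\<not> lf_contains [2 * delta_F ls + 1, delta_F ls + 1] ls
            \<longrightarrow> (\<exists>l. odd l \<and> ls = [l, l]))
       \<and> ((\<exists>l. odd l \<and> ls = [l, l])
            \<longrightarrow> lf_contains [2 * delta_F ls + 1, delta_F ls + 2] ls)"
proof (intro conjI impI)
  show "\<exists>l. odd l \<and> ls = [l, l]" if "\<not> lf_contains [2 * delta_F ls + 1, delta_F ls + 1] ls"
    using that lf_contains_delta_F_paths_unless_odd_twin assms(1,3) by blast
next
  assume "\<exists>l. odd l \<and> ls = [l, l]"
  then obtain l where l: "odd l" "ls = [l, l]" by blast
  with assms(3) have "5 \<le> l" by (auto elim!: oddE)
  with l show "lf_contains [2 * delta_F ls + 1, delta_F ls + 2] ls"
    using lf_contains_odd_twin by simp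
qed

end
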